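(* Let $k\ge3$ and let $\boldsymbol x^*$ be a pure Nash equilibrium of $\mathcal L(n,S_k)$. Then: (a) some player is located at the center $v_0$; (b) for every $x\in S_k\setminus\{v_0\}$, $\operatorname{card}\{i:x_i^*=x\}\le2$; (c) $\operatorname{card}\{i:x_i^*=v_0\}\le k$; (d) if some player is located in $S_k\setminus\{v_0\}$, then for every $j\in\{1,\dots,k\}$ the edge $[v_0,v_j]$ contains, outside $v_0$, at least two players, and the two players on $[v_0,v_j]\setminus\{v_0\}$ that are farthest from $v_0$ are located at the same point.
   Context: The star $S_k$ is the network with vertices $v_0,v_1,\dots,v_k$ and edges $[v_0,v_j]$, $j=1,\dots,k$, each of length $1$. It carries length measure $\lambda$ and shortest-path distance $d$. Location game $\mathcal L(n,S_k)$: $n$ players each choose a point of $S_k$. Consumers are distributed according to $\lambda$, and each shops at a closest occupied location. Consumers equidistant from several closest occupied locations are split equally among those locations, and the share of a location is split equally among the players located there. Payoff is the mass of consumers attracted. Nash equilibria are pure. *)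

theory Defs
  imports "HOL-Analysis.Analysis"
begin

text \<open>Points of the star S_k: the centre v0 is (0,0); a point on edge [v0,vj]
  at distance t (0 < t <= 1) from v0 is (j,t), with 1 <= j <= k.\<close>

type_synonym spt = "nat \<times> real"

definition center :: spt where "center = (0, 0)"

definition star_pt :: "nat \<Rightarrow> spt \<Rightarrow> bool" where
  "star_pt k p \<longleftrightarrow> p = center \<or> (1 \<le> fst p \<and> fst p \<le> k \<and> 0 < snd p \<and> snd p \<le> 1)"

definition star_dist :: "spt \<Rightarrow> spt \<Rightarrow> real" where
  "star_dist p q = (if fst p = fst q then \<bar>snd p - snd q\<bar> else snd p + snd q)"

definition share :: "nat \<Rightarrow> (nat \<Rightarrow> spt) \<Rightarrow> nat \<Rightarrow> spt \<Rightarrow> real" where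
  "share n x i y =
     (let D = Min ((\<lambda>m. star_dist y (x m)) ` {..<n});
          C = {p \<in> x ` {..<n}. star_dist y p = D}
      in if star_dist y (x i) = D
         then 1 / (real (card C) * real (card {m \<in> {..<n}. x m = x i}))
         else 0)"

definition payoff :: "nat \<Rightarrow> nat \<Rightarrow> (nat \<Rightarrow> spt) \<Rightarrow> nat \<Rightarrow> real" where
  "payoff k n x i = (\<Sum>j = 1..k. integral {0..1} (\<lambda>t. share n x i (j, t)))"

definition nash_eq :: "nat \<Rightarrow> nat \<Rightarrow> (nat \<Rightarrow> spt) \<Rightarrow> bool" where
  "nash_eq k n x \<longleftrightarrow>
     (\<forall>i<n. star_pt k (x i)) \<and>
     (\<forall>i<n. \<forall>y. star_pt k y \<longrightarrow> payoff k n (x(i := y)) i \<le> payoff k n x i)"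

end

theory Submission
  imports Defs
begin

text \<open>
  Seen from a single edge \<open>j\<close>, the star unfolds into a line: a consumer at distance \<open>t\<close> from
  the centre on edge \<open>j\<close> is at distance \<open>|t - c|\<close> from a player whose coordinate \<open>c\<close> is its
  distance to the centre if it sits on edge \<open>j\<close>, and minus that distance otherwise. So all
  estimates are Hotelling estimates on a segment: on an edge a player earns at most its share
  bound times the length between the midpoints to its nearest neighbours, and any player can
  secure half of a gap between the other players' coordinates by moving just inside it.

  (c) More than \<open>k\<close> players at the centre split the \<open>k\<close> half-gaps next to the centre, each of
  which one of them could take alone. (b) Three players at a point of an edge share their cell
  three ways, while moving inwards or outwards yields the whole part of the cell on that side.
  (d) A player off the centre would move to an empty edge, and the farthest player on an edge,
  if alone, would move next to its inner neighbour. (a) If the centre is empty, the player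
  nearest to it gains by moving to the centre (or, if it shares its point, by the average of
  that move and a small outward move) as soon as two further edges are occupied, each of them
  contributing half its distance to the centre; since \<open>k \<ge> 3\<close>, an empty edge would otherwise
  exist and attract a player from the edge of the nearest one.
\<close>

section \<open>Shares and edge payoffs\<close>

lemma share_nonneg: "0 \<le> share n x i y"
  by (simp add: share_def Let_def)

lemma share_le_one: "share n x i y \<le> 1"
proof -
  have "1 / (real a * real b) \<le> 1" for a b :: nat
    by (cases "a = 0 \<or> b = 0") (auto simp: divide_le_eq_1 Suc_le_eq simp flip: of_nat_mult)
  then show ?thesis
    by (simp add: share_def Let_def)
qed

lemma share_le_inverse:
  assumes "i < n" "0 < d" "d \<le> real (card {m \<in> {..<n}. x m = x i})"
  shows "share n x i y \<le> 1 / d"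
proof -
  let ?D = "Min ((\<lambda>m. star_dist y (x m)) ` {..<n})"
  let ?C = "{p \<in> x ` {..<n}. star_dist y p = ?D}"
  let ?M = "{m \<in> {..<n}. x m = x i}"
  show ?thesis
  proof (cases "star_dist y (x i) = ?D")
    case True
    then have "x i \<in> ?C" using assms(1) by auto
    moreover have "finite ?C"
      by simp
    ultimately have "0 < card ?C"
      using card_gt_0_iff by blast
    then have "1 \<le> real (card ?C)"
      by simp
    then have "d \<le> real (card ?C) * real (card ?M)"
      using assms(3) mult_right_mono[of 1 "real (card ?C)" "real (card ?M)"] by simp
    then show ?thesis
      using True assms(2) by (simp add: share_def Let_def frac_le)
  qed (simp add: share_def Let_def assms(2) less_imp_le)
qed

lemma card_le_one_unique:
  fixes n :: nat
  assumes "card {m \<in> {..<n}. x m = x i} \<le> 1" "i < n" "m < n" "x m = x i"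
  shows "m = i"
proof -
  have "\<forall>a\<in>{m \<in> {..<n}. x m = x i}. \<forall>b\<in>{m \<in> {..<n}. x m = x i}. a = b"
    using assms(1) by (subst card_le_Suc0_iff_eq [symmetric]) auto
  then show ?thesis
    using assms(2-4) by blast
qed

lemma share_eq_zero:
  assumes "m < n" "star_dist y (x m) < star_dist y (x i)"
  shows "share n x i y = 0"
proof -
  have "Min ((\<lambda>m. star_dist y (x m)) ` {..<n}) \<le> star_dist y (x m)"
    using assms(1) by (intro Min_le) auto
  then show ?thesis
    using assms(2) by (simp add: share_def Let_def)
qed

lemma share_update_eq_one:
  assumes "i < n" "\<And>m. m < n \<Longrightarrow> m \<noteq> i \<Longrightarrow> star_dist y q < star_dist y (x m)"
  shows "share n (x(i := q)) i y = 1"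
proof -
  let ?x = "x(i := q)"
  have D: "Min ((\<lambda>m. star_dist y (?x m)) ` {..<n}) = star_dist y q"
  proof (rule Min_eqI)
    show "star_dist y q \<in> (\<lambda>m. star_dist y (?x m)) ` {..<n}"
      using assms(1) by (auto intro!: image_eqI[of _ _ i])
  qed (use assms in \<open>auto simp: less_imp_le\<close>)
  have C: "{p \<in> ?x ` {..<n}. star_dist y p = star_dist y q} = {q}"
    using assms by (auto simp: image_iff) (metis less_irrefl)
  have M: "{m \<in> {..<n}. ?x m = q} = {i}"
    using assms by auto
  show ?thesis
    unfolding share_def Let_def D using C M assms(1) by simp
qed

lemma star_dist_measurable: "(\<lambda>t. star_dist (j, t) p) \<in> borel_measurable borel"
  by (intro borel_measurable_continuous_onI)
    (cases "j = fst p"; simp add: star_dist_def continuous_intros)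

lemma share_measurable: "(\<lambda>t. share n x i (j, t)) \<in> borel_measurable borel"
proof -
  define D where "D t = Min ((\<lambda>m. star_dist (j, t) (x m)) ` {..<n})" for t
  define C where "C t = (\<Sum>p\<in>x ` {..<n}. if star_dist (j, t) p = D t then 1 else 0 :: real)" for t
  define M where "M = real (card {m \<in> {..<n}. x m = x i})"
  have D: "D \<in> borel_measurable borel"
    unfolding D_def by (intro borel_measurable_Min star_dist_measurable) auto
  have C: "C \<in> borel_measurable borel"
    unfolding C_def
    by (intro borel_measurable_sum measurable_If measurable_equality_set star_dist_measurable D) auto
  have "share n x i (j, t) = (if star_dist (j, t) (x i) = D t then 1 / (C t * M) else 0)" for t
  proof -
    have "real (card {p \<in> x ` {..<n}. star_dist (j, t) p = D t}) = C t"
      by (simp add: C_def sum.If_cases Int_def)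
    then show ?thesis
      by (simp add: share_def Let_def D_def M_def)
  qed
  then show ?thesis
    by (simp only:) (intro measurable_If measurable_equality_set star_dist_measurable D
        borel_measurable_divide borel_measurable_times C borel_measurable_const; simp)
qed

lemma share_integrable: "(\<lambda>t. share n x i (j, t)) integrable_on {0..1}"
proof (rule measurable_bounded_by_integrable_imp_integrable_real)
  show "(\<lambda>t. share n x i (j, t)) \<in> borel_measurable (lebesgue_on {0..1})"
    using share_measurable by (simp add: measurable_completion measurable_restrict_space1)
  show "\<bar>share n x i (j, t)\<bar> \<le> 1" for t
    using share_nonneg share_le_one by simp
qed auto

definition edge_payoff :: "nat \<Rightarrow> (nat \<Rightarrow> spt) \<Rightarrow> nat \<Rightarrow> nat \<Rightarrow> real" where
  "edge_payoff n x i j = integral {0..1} (\<lambda>t. share n x i (j, t))"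

lemma payoff_eq_sum_edge_payoff: "payoff k n x i = (\<Sum>j = 1..k. edge_payoff n x i j)"
  by (simp add: payoff_def edge_payoff_def)

lemma edge_payoff_nonneg: "0 \<le> edge_payoff n x i j"
  unfolding edge_payoff_def by (intro integral_nonneg share_integrable share_nonneg)

lemma payoff_nonneg: "0 \<le> payoff k n x i"
  unfolding payoff_eq_sum_edge_payoff by (intro sum_nonneg edge_payoff_nonneg)

lemma edge_payoff_le_payoff: "j \<in> {1..k} \<Longrightarrow> edge_payoff n x i j \<le> payoff k n x i"
  unfolding payoff_eq_sum_edge_payoff
  by (rule member_le_sum) (auto simp: edge_payoff_nonneg)

lemma edge_payoff_le_interval:
  assumes "0 \<le> lo" "lo \<le> hi" "hi \<le> 1"
    and "\<And>t. 0 \<le> t \<Longrightarrow> t \<le> 1 \<Longrightarrow> share n x i (j, t) \<le> c"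
    and "\<And>t. 0 \<le> t \<Longrightarrow> t \<le> 1 \<Longrightarrow> t < lo \<or> hi < t \<Longrightarrow> share n x i (j, t) = 0"
  shows "edge_payoff n x i j \<le> c * (hi - lo)"
proof -
  have "((\<lambda>t. c) has_integral c * (hi - lo)) ({lo..hi} \<inter> {0..1})"
    using has_integral_const_real[of c lo hi] assms(1-3) by (simp add: Int_absorb2 mult.commute)
  then have "((\<lambda>t. if t \<in> {lo..hi} then c else 0) has_integral c * (hi - lo)) {0..1}"
    by (subst has_integral_restrict_Int)
  then show ?thesis
    unfolding edge_payoff_def
    by (rule has_integral_le[OF integrable_integral[OF share_integrable]]) (use assms(4,5) in force)
qed

lemma edge_payoff_ge_interval:
  assumes "0 \<le> lo" "hi \<le> 1" "\<And>t. lo < t \<Longrightarrow> t < hi \<Longrightarrow> share n x i (j, t) = 1"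
  shows "hi - lo \<le> edge_payoff n x i j"
proof (cases "lo < hi")
  case True
  have "((\<lambda>t. 1 :: real) has_integral hi - lo) {lo..hi}"
    using has_integral_const_real[of "1 :: real" lo hi] True by simp
  then have "((\<lambda>t. 1 :: real) has_integral hi - lo) {lo<..<hi}"
    by (simp add: has_integral_Icc_iff_Ioo)
  moreover have "{lo<..<hi} \<inter> {0..1} = {lo<..<hi}"
    using assms(1,2) by auto
  ultimately have "((\<lambda>t. if t \<in> {lo<..<hi} then 1 else 0) has_integral hi - lo) {0..1}"
    by (simp only: has_integral_restrict_Int)
  then show ?thesis
    unfolding edge_payoff_def
    by (rule has_integral_le[OF _ integrable_integral[OF share_integrable]])
      (use assms(3) share_nonneg in auto)
qed (use edge_payoff_nonneg[of n x i j] in simp)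

lemma edge_payoff_le_share_bound:
  "(\<And>t. share n x i (j, t) \<le> c) \<Longrightarrow> edge_payoff n x i j \<le> c"
  using edge_payoff_le_interval[of 0 1 n x i j c] by simp

lemma payoff_le_own_edge_payoff:
  assumes "m < n" "0 \<le> snd (x m)" "snd (x m) < snd (x i)" "fst (x i) \<in> {1..k}"
  shows "payoff k n x i \<le> edge_payoff n x i (fst (x i))"
proof -
  have "edge_payoff n x i j = 0" if "j \<noteq> fst (x i)" for j
  proof -
    have "share n x i (j, t) = 0" if "0 \<le> t" for t
      using assms(2,3) that \<open>j \<noteq> fst (x i)\<close>
      by (intro share_eq_zero[OF assms(1)]) (auto simp: star_dist_def)
    then have "edge_payoff n x i j \<le> 0 * (0 - 0)"
      by (intro edge_payoff_le_interval) auto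
    then show ?thesis
      using edge_payoff_nonneg by (simp add: order_antisym)
  qed
  then show ?thesis
    using assms(4) by (simp add: payoff_eq_sum_edge_payoff sum.remove)
qed

section \<open>The star seen from one edge\<close>

definition edge_coord :: "nat \<Rightarrow> spt \<Rightarrow> real" where
  "edge_coord j p = (if fst p = j then snd p else - snd p)"

lemma star_dist_edge_coord:
  "0 \<le> t \<Longrightarrow> 0 \<le> snd p \<Longrightarrow> star_dist (j, t) p = \<bar>t - edge_coord j p\<bar>"
  by (simp add: star_dist_def edge_coord_def)

lemma abs_diff_less_in_cell:
  fixes a b l r t :: real
  assumes "l < a" "a < r" "(l + a) / 2 < t" "t < (a + r) / 2" "b \<le> l \<or> r \<le> b"
  shows "\<bar>t - a\<bar> < \<bar>t - b\<bar>"
  using assms by (auto simp: abs_if)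

lemma edge_payoff_update_ge_cell:
  assumes "i < n" "\<And>m. m < n \<Longrightarrow> 0 \<le> snd (x m)" "0 \<le> snd q"
    and "l < edge_coord j q" "edge_coord j q < r"
    and "0 \<le> lo" "(l + edge_coord j q) / 2 \<le> lo" "hi \<le> (edge_coord j q + r) / 2" "hi \<le> 1"
    and "\<And>m. m < n \<Longrightarrow> m \<noteq> i \<Longrightarrow> edge_coord j (x m) \<le> l \<or> r \<le> edge_coord j (x m)"
  shows "hi - lo \<le> edge_payoff n (x(i := q)) i j"
proof (rule edge_payoff_ge_interval)
  fix t assume t: "lo < t" "t < hi"
  show "share n (x(i := q)) i (j, t) = 1"
  proof (rule share_update_eq_one[OF assms(1)])
    fix m assume "m < n" "m \<noteq> i"
    then show "star_dist (j, t) q < star_dist (j, t) (x m)"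
      using t assms(2-10) abs_diff_less_in_cell[of l "edge_coord j q" r t "edge_coord j (x m)"]
      by (simp add: star_dist_edge_coord)
  qed
qed (use assms in auto)

lemma edge_payoff_le_cell:
  assumes "i < n" "\<And>m. m < n \<Longrightarrow> 0 \<le> snd (x m)" "\<And>t. share n x i (j, t) \<le> c"
    and "0 \<le> lo" "lo \<le> hi" "hi \<le> 1"
    and lower: "lo = 0 \<or> (\<exists>m<n. edge_coord j (x m) < edge_coord j (x i)
                 \<and> lo \<le> (edge_coord j (x m) + edge_coord j (x i)) / 2)"
    and upper: "hi = 1 \<or> (\<exists>m<n. edge_coord j (x i) < edge_coord j (x m)
                 \<and> (edge_coord j (x i) + edge_coord j (x m)) / 2 \<le> hi)"
  shows "edge_payoff n x i j \<le> c * (hi - lo)"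
proof (rule edge_payoff_le_interval)
  fix t assume t: "0 \<le> t" "t \<le> 1" "t < lo \<or> hi < t"
  then obtain m where "m < n" "\<bar>t - edge_coord j (x m)\<bar> < \<bar>t - edge_coord j (x i)\<bar>"
    using lower upper by (auto simp: abs_if)
  then show "share n x i (j, t) = 0"
    using t assms(1,2) by (intro share_eq_zero[of m]) (simp_all add: star_dist_edge_coord)
qed (use assms in auto)

text \<open>With no other player beyond \<open>s\<close>, the default \<open>2 - s\<close> puts the midpoint of the gap at the leaf.\<close>

definition next_above :: "nat \<Rightarrow> (nat \<Rightarrow> spt) \<Rightarrow> nat \<Rightarrow> nat \<Rightarrow> real \<Rightarrow> real" where
  "next_above n x i j s =
     Min (insert (2 - s) {edge_coord j (x m) | m. m < n \<and> m \<noteq> i \<and> s < edge_coord j (x m)})"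

definition next_below :: "nat \<Rightarrow> (nat \<Rightarrow> spt) \<Rightarrow> nat \<Rightarrow> nat \<Rightarrow> real \<Rightarrow> real" where
  "next_below n x i j s = Max {edge_coord j (x m) | m. m < n \<and> m \<noteq> i \<and> edge_coord j (x m) < s}"

lemma next_above_le: "next_above n x i j s \<le> 2 - s"
  unfolding next_above_def by (rule Min_le) auto

lemma next_above_ge: "s \<le> 1 \<Longrightarrow> s \<le> next_above n x i j s"
  unfolding next_above_def by (subst Min_ge_iff) auto

lemma next_above_gap:
  "m < n \<Longrightarrow> m \<noteq> i \<Longrightarrow> edge_coord j (x m) \<le> s \<or> next_above n x i j s \<le> edge_coord j (x m)"
  unfolding next_above_def by (cases "s < edge_coord j (x m)") (auto intro!: Min_le)

lemma next_above_cases: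
  "next_above n x i j s = 2 - s \<or>
     (\<exists>m<n. m \<noteq> i \<and> s < edge_coord j (x m) \<and> edge_coord j (x m) = next_above n x i j s)"
proof -
  have "next_above n x i j s \<in>
      insert (2 - s) {edge_coord j (x m) | m. m < n \<and> m \<noteq> i \<and> s < edge_coord j (x m)}"
    unfolding next_above_def by (rule Min_in) auto
  then show ?thesis by auto
qed

lemma next_below_ge:
  "m < n \<Longrightarrow> m \<noteq> i \<Longrightarrow> edge_coord j (x m) < s \<Longrightarrow> edge_coord j (x m) \<le> next_below n x i j s"
  unfolding next_below_def by (rule Max_ge) auto

lemma next_below_mem:
  assumes "m0 < n" "m0 \<noteq> i" "edge_coord j (x m0) < s"
  shows "\<exists>m<n. m \<noteq> i \<and> edge_coord j (x m) = next_below n x i j s \<and> next_below n x i j s < s"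
proof -
  have "next_below n x i j s \<in> {edge_coord j (x m) | m. m < n \<and> m \<noteq> i \<and> edge_coord j (x m) < s}"
    unfolding next_below_def by (rule Max_in) (use assms in auto)
  then show ?thesis by auto
qed

lemma two_other_edges:
  fixes k e :: nat
  assumes "3 \<le> k" "e \<in> {1..k}"
  obtains j1 j2 where "j1 \<in> {1..k}" "j2 \<in> {1..k}" "j1 \<noteq> e" "j2 \<noteq> e" "j1 \<noteq> j2"
proof -
  consider "e = 1" | "e = 2" | "e \<noteq> 1" "e \<noteq> 2"
    by blast
  then show thesis
  proof cases
    case 1
    then show thesis using assms(1) by (intro that[of 2 3]) auto
  next
    case 2
    then show thesis using assms(1) by (intro that[of 1 3]) auto
  next
    case 3
    then show thesis using assms(1) by (intro that[of 1 2]) auto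
  qed
qed

section \<open>Equilibria\<close>

locale star_nash =
  fixes k n :: nat and x :: "nat \<Rightarrow> spt"
  assumes nash: "nash_eq k n x"
begin

lemma star_pt_player: "m < n \<Longrightarrow> star_pt k (x m)"
  using nash by (simp add: nash_eq_def)

lemma snd_player_nonneg: "m < n \<Longrightarrow> 0 \<le> snd (x m)"
  using star_pt_player[of m] by (auto simp: star_pt_def center_def)

lemma player_off_center:
  "m < n \<Longrightarrow> x m \<noteq> center \<Longrightarrow> fst (x m) \<in> {1..k} \<and> 0 < snd (x m) \<and> snd (x m) \<le> 1"
  using star_pt_player by (auto simp: star_pt_def)

lemma payoff_update_le: "i < n \<Longrightarrow> star_pt k q \<Longrightarrow> payoff k n (x(i := q)) i \<le> payoff k n x i"
  using nash unfolding nash_eq_def by blast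

lemma payoff_ge_half_gap:
  assumes "i < n" "e \<in> {1..k}" "0 \<le> s" "s \<le> v" "s + v \<le> 2"
    and gap: "\<And>m. m < n \<Longrightarrow> m \<noteq> i \<Longrightarrow> edge_coord e (x m) \<le> s \<or> v \<le> edge_coord e (x m)"
  shows "(v - s) / 2 \<le> payoff k n x i"
proof (cases "s < v")
  case True
  \<comment> \<open>moving to \<open>(e, a)\<close> with \<open>s < a\<close> secures \<open>(v - a) / 2\<close>; let \<open>a\<close> decrease to \<open>s\<close>\<close>
  show ?thesis
  proof (rule dense_le_bounded)
    show "(v - min v 1) / 2 < (v - s) / 2"
      using True assms(5) by simp
    fix w assume w: "(v - min v 1) / 2 < w" "w < (v - s) / 2"
    define a where "a = v - 2 * w"
    have a: "s < a" "a < v" "a \<le> 1"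
      using w by (auto simp: a_def)
    have "(s + v) / 2 - (s + a) / 2 \<le> edge_payoff n (x(i := (e, a))) i e"
      using assms(1,3,5) a by (intro edge_payoff_update_ge_cell[where l = s and r = v] gap)
        (auto simp: edge_coord_def snd_player_nonneg)
    also have "\<dots> \<le> payoff k n (x(i := (e, a))) i"
      using assms(2) by (rule edge_payoff_le_payoff)
    also have "\<dots> \<le> payoff k n x i"
      using assms(1,2,3) a by (intro payoff_update_le) (auto simp: star_pt_def)
    finally show "w \<le> payoff k n x i"
      by (simp add: a_def field_simps)
  qed
qed (use payoff_nonneg[of k n x i] in simp)

lemma edge_occupied:
  assumes "ic < n" "x ic = center" "i < n" "x i \<noteq> center" "j \<in> {1..k}"
  shows "\<exists>m<n. fst (x m) = j"
proof (rule ccontr)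
  assume empty: "\<not> ?thesis"
  obtain e s where xi: "x i = (e, s)"
    by fastforce
  have i: "e \<in> {1..k}" "0 < s" "s \<le> 1"
    using player_off_center[OF assms(3,4)] xi by auto
  have "payoff k n x i \<le> edge_payoff n x i e"
    using payoff_le_own_edge_payoff[of ic n x i k] assms(1-3) i xi by (simp add: center_def)
  also have "\<dots> \<le> 1 * (1 - s / 2)"
    using assms(1,2) i xi
    by (intro edge_payoff_le_cell[OF assms(3) snd_player_nonneg share_le_one])
      (auto simp: edge_coord_def center_def)
  also have "\<dots> < (2 - 0) / 2"
    using i by simp
  also have "\<dots> \<le> payoff k n x i"
    using assms(3,5) empty by (intro payoff_ge_half_gap) (auto simp: edge_coord_def snd_player_nonneg)
  finally show False
    by simp
qed

lemma farthest_player_not_alone: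
  assumes "ic < n" "x ic = center" "i < n" "x i \<noteq> center"
    and farthest: "\<And>m. m < n \<Longrightarrow> fst (x m) = fst (x i) \<Longrightarrow> snd (x m) \<le> snd (x i)"
  shows "2 \<le> card {m \<in> {..<n}. x m = x i}"
proof (rule ccontr)
  assume "\<not> ?thesis"
  then have card: "card {m \<in> {..<n}. x m = x i} \<le> 1"
    by simp
  have alone: "x m \<noteq> x i" if "m < n" "m \<noteq> i" for m
    using card_le_one_unique[OF card assms(3) that(1)] that(2) by blast
  obtain e s where xi: "x i = (e, s)"
    by fastforce
  have i: "e \<in> {1..k}" "0 < s" "s \<le> 1"
    using player_off_center[OF assms(3,4)] xi by auto
  have ic: "ic \<noteq> i" "edge_coord e (x ic) = 0"
    using assms(2,4) i xi by (auto simp: edge_coord_def center_def)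
  have others_below: "edge_coord e (x m) < s" if "m < n" "m \<noteq> i" for m
  proof (cases "fst (x m) = e")
    case True
    then have "snd (x m) \<noteq> s"
      using alone[OF that] xi by (auto simp: prod_eq_iff)
    then show ?thesis
      using farthest[OF that(1)] True xi by (simp add: edge_coord_def)
  next
    case False
    then show ?thesis
      using snd_player_nonneg[OF that(1)] i by (simp add: edge_coord_def)
  qed
  define u where "u = next_below n x i e s"
  obtain mu where mu: "mu < n" "edge_coord e (x mu) = u" "u < s"
    using next_below_mem[of ic n i e x s] assms(1) ic i by (auto simp: u_def)
  have u_nonneg: "0 \<le> u"
    using next_below_ge[of ic n i e x s] assms(1) ic i by (simp add: u_def)
  have u: "edge_coord e (x m) \<le> u" if "m < n" "m \<noteq> i" for m
    using next_below_ge[of m n i e x s] assms(1) ic i others_below that by (simp add: u_def)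
  have "payoff k n x i \<le> edge_payoff n x i e"
    using payoff_le_own_edge_payoff[of ic n x i k] assms(1-3) i xi by (simp add: center_def)
  also have "\<dots> \<le> 1 * (1 - (u + s) / 2)"
  proof (rule edge_payoff_le_cell[OF assms(3) snd_player_nonneg share_le_one])
    have "edge_coord e (x mu) < edge_coord e (x i)"
      using mu xi by (simp add: edge_coord_def)
    then show "(u + s) / 2 = 0 \<or> (\<exists>m<n. edge_coord e (x m) < edge_coord e (x i)
        \<and> (u + s) / 2 \<le> (edge_coord e (x m) + edge_coord e (x i)) / 2)"
      using mu xi by (auto simp: edge_coord_def)
  qed (use mu u_nonneg i in auto)
  also have "\<dots> < ((2 - u) - u) / 2"
    using mu by simp
  also have "\<dots> \<le> payoff k n x i"
    using assms(3) i mu u u_nonneg by (intro payoff_ge_half_gap) auto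
  finally show False
    by simp
qed

lemma card_at_edge_point_le_two:
  assumes "ic < n" "x ic = center" "p \<noteq> center"
  shows "card {m \<in> {..<n}. x m = p} \<le> 2"
proof (rule ccontr)
  assume crowd: "\<not> ?thesis"
  then have "{m \<in> {..<n}. x m = p} \<noteq> {}"
    by (metis card.empty le0)
  then obtain i where i: "i < n" "x i = p"
    by blast
  have share: "share n x i y \<le> 1 / 3" for y
    using crowd i(2) by (intro share_le_inverse[OF i(1)]) auto
  obtain e s where xi: "x i = (e, s)"
    by fastforce
  have pos: "e \<in> {1..k}" "0 < s" "s \<le> 1" "edge_coord e (x i) = s"
    using player_off_center[OF i(1)] assms(3) i(2) xi by (auto simp: edge_coord_def)
  have ic: "ic \<noteq> i" "edge_coord e (x ic) = 0"
    using assms(2,3) i pos by (auto simp: edge_coord_def center_def)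
  define u v where "u = next_below n x i e s" and "v = next_above n x i e s"
  obtain mu where mu: "mu < n" "edge_coord e (x mu) = u" "u < s"
    using next_below_mem[of ic n i e x s] assms(1) ic pos by (auto simp: u_def)
  have u_nonneg: "0 \<le> u"
    using next_below_ge[of ic n i e x s] assms(1) ic pos by (simp add: u_def)
  have gap_below: "edge_coord e (x m) \<le> u \<or> s \<le> edge_coord e (x m)" if "m < n" "m \<noteq> i" for m
    using next_below_ge[of m n i e x s] that by (force simp: u_def)
  have v: "s \<le> v" "v \<le> 2 - s"
    using next_above_ge[OF pos(3)] next_above_le by (simp_all add: v_def)
  have "payoff k n x i \<le> edge_payoff n x i e"
    using payoff_le_own_edge_payoff[of ic n x i k] assms(1,2) i(1) pos xi by (simp add: center_def)
  also have "\<dots> \<le> 1 / 3 * ((s + v) / 2 - (u + s) / 2)"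
  proof (rule edge_payoff_le_cell[OF i(1) snd_player_nonneg share])
    show "(u + s) / 2 = 0 \<or> (\<exists>m<n. edge_coord e (x m) < edge_coord e (x i)
        \<and> (u + s) / 2 \<le> (edge_coord e (x m) + edge_coord e (x i)) / 2)"
      using mu pos by auto
    show "(s + v) / 2 = 1 \<or> (\<exists>m<n. edge_coord e (x i) < edge_coord e (x m)
        \<and> (edge_coord e (x i) + edge_coord e (x m)) / 2 \<le> (s + v) / 2)"
      using next_above_cases[of n x i e s] pos by (auto simp: v_def)
  qed (use u_nonneg mu v in auto)
  also have "\<dots> < ((s - u) / 2 + (v - s) / 2) / 2"
    using mu v by (simp add: field_simps)
  also have "\<dots> \<le> payoff k n x i"
  proof -
    have "(s - u) / 2 \<le> payoff k n x i"
      using i(1) pos mu u_nonneg gap_below by (intro payoff_ge_half_gap) auto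
    moreover have "(v - s) / 2 \<le> payoff k n x i"
      using i(1) pos(1-3) v next_above_gap[of _ n i e x s] by (intro payoff_ge_half_gap) (auto simp: v_def)
    ultimately show ?thesis
      by argo
  qed
  finally show False
    by simp
qed

lemma card_at_center_le:
  assumes "1 \<le> k" "ic < n" "x ic = center"
  shows "card {m \<in> {..<n}. x m = center} \<le> k"
proof (rule ccontr)
  assume "\<not> ?thesis"
  then have crowd: "real k < real (card {m \<in> {..<n}. x m = x ic})"
    using assms(3) by simp
  define c where "c = real (card {m \<in> {..<n}. x m = x ic})"
  define \<pi> where "\<pi> = payoff k n x ic"
  define w where "w j = next_above n x ic j 0" for j
  have w: "0 < w j" "w j \<le> 2" for j
    using next_above_cases[of n x ic j 0] next_above_le[of n x ic j 0] by (auto simp: w_def)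
  have \<pi>_ge: "w j / 2 \<le> \<pi>" if "j \<in> {1..k}" for j
  proof -
    have "(w j - 0) / 2 \<le> \<pi>"
      unfolding \<pi>_def using w[of j] next_above_gap
      by (intro payoff_ge_half_gap[OF assms(2) that]) (auto simp: w_def)
    then show ?thesis
      by simp
  qed
  have edge_le: "edge_payoff n x ic j \<le> 1 / c * (w j / 2 - 0)" if "j \<in> {1..k}" for j
  proof (rule edge_payoff_le_cell[OF assms(2) snd_player_nonneg])
    show "share n x ic (j, t) \<le> 1 / c" for t
      using crowd by (intro share_le_inverse[OF assms(2)]) (simp_all add: c_def)
    show "w j / 2 = 1 \<or> (\<exists>m<n. edge_coord j (x ic) < edge_coord j (x m)
        \<and> (edge_coord j (x ic) + edge_coord j (x m)) / 2 \<le> w j / 2)"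
      using next_above_cases[of n x ic j 0] that assms(3) by (auto simp: w_def edge_coord_def center_def)
  qed (use w[of j] in auto)
  have "\<pi> = (\<Sum>j = 1..k. edge_payoff n x ic j)"
    by (simp add: \<pi>_def payoff_eq_sum_edge_payoff)
  also have "\<dots> \<le> (\<Sum>j = 1..k. \<pi> / c)"
  proof (rule sum_mono)
    fix j assume j: "j \<in> {1..k}"
    have "edge_payoff n x ic j \<le> (w j / 2) / c"
      using edge_le[OF j] by simp
    also have "\<dots> \<le> \<pi> / c"
      using \<pi>_ge[OF j] crowd by (intro divide_right_mono) (auto simp: c_def)
    finally show "edge_payoff n x ic j \<le> \<pi> / c" .
  qed
  also have "\<dots> < \<pi>"
    using \<pi>_ge[of 1] w[of 1] assms(1) crowd by (simp add: c_def field_simps)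
  finally show False
    by simp
qed

context
  fixes i0 e :: nat and r :: real
  assumes i0: "i0 < n" "x i0 = (e, r)"
    and no_center: "\<And>m. m < n \<Longrightarrow> x m \<noteq> center"
    and nearest: "\<And>m. m < n \<Longrightarrow> r \<le> snd (x m)"
begin

lemma nearest_position: "e \<in> {1..k}" "0 < r" "r \<le> 1"
  using player_off_center[OF i0(1) no_center[OF i0(1)]] i0(2) by auto

lemma coord_outside_nearest: "m < n \<Longrightarrow> edge_coord j (x m) \<le> - r \<or> r \<le> edge_coord j (x m)"
  using nearest[of m] by (auto simp: edge_coord_def)

lemma next_above_ge_nearest: "r \<le> next_above n x i0 j 0"
proof (cases "next_above n x i0 j 0 = 2")
  case False
  then obtain m where "m < n" "0 < edge_coord j (x m)" "edge_coord j (x m) = next_above n x i0 j 0"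
    using next_above_cases[of n x i0 j 0] by auto
  then show ?thesis
    using coord_outside_nearest[of m j] nearest_position by auto
qed (use nearest_position in simp)

lemma center_deviation_edge_payoff:
  assumes "j \<in> {1..k}"
  shows "next_above n x i0 j 0 / 2 \<le> edge_payoff n (x(i0 := center)) i0 j"
proof -
  let ?w = "next_above n x i0 j 0"
  have "?w / 2 - 0 \<le> edge_payoff n (x(i0 := center)) i0 j"
  proof (rule edge_payoff_update_ge_cell[OF i0(1) snd_player_nonneg, where l = "- r" and r = ?w])
    fix m assume "m < n" "m \<noteq> i0"
    then show "edge_coord j (x m) \<le> - r \<or> ?w \<le> edge_coord j (x m)"
      using next_above_gap[of m n i0 j x 0] coord_outside_nearest[of m j] nearest_position by auto
  qed (use assms next_above_ge_nearest[of j] next_above_le[of n x i0 j 0] nearest_position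
      in \<open>auto simp: edge_coord_def center_def\<close>)
  then show ?thesis
    by simp
qed

text \<open>Dividing by the share bound \<open>c\<close> lets one estimate serve both for a lone (\<open>c = 1\<close>) and a
  shared (\<open>c = 1/2\<close>) nearest player.\<close>

lemma other_edge_gain:
  assumes "j \<in> {1..k}" "j \<noteq> e" "0 < c" "\<And>y. share n x i0 y \<le> c"
  shows "0 \<le> edge_payoff n (x(i0 := center)) i0 j - edge_payoff n x i0 j / c"
    and "next_above n x i0 j 0 < 2 \<Longrightarrow>
           r / 2 \<le> edge_payoff n (x(i0 := center)) i0 j - edge_payoff n x i0 j / c"
proof -
  let ?w = "next_above n x i0 j 0"
  have before: "edge_payoff n x i0 j / c \<le> (?w - r) / 2" if occupied: "?w < 2"
  proof -
    obtain m where m: "m < n" "m \<noteq> i0" "0 < edge_coord j (x m)" "edge_coord j (x m) = ?w"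
      using next_above_cases[of n x i0 j 0] occupied by auto
    have "edge_payoff n x i0 j \<le> c * ((?w - r) / 2 - 0)"
    proof (rule edge_payoff_le_cell[OF i0(1) snd_player_nonneg assms(4)])
      show "(?w - r) / 2 = 1 \<or> (\<exists>m<n. edge_coord j (x i0) < edge_coord j (x m)
          \<and> (edge_coord j (x i0) + edge_coord j (x m)) / 2 \<le> (?w - r) / 2)"
        using m i0(2) assms(2) nearest_position by (auto simp: edge_coord_def)
    qed (use occupied next_above_ge_nearest[of j] nearest_position in auto)
    then show ?thesis
      using assms(3) by (simp add: field_simps)
  qed
  have after: "?w / 2 \<le> edge_payoff n (x(i0 := center)) i0 j"
    using center_deviation_edge_payoff[OF assms(1)] .
  show "r / 2 \<le> edge_payoff n (x(i0 := center)) i0 j - edge_payoff n x i0 j / c" if "?w < 2"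
    using before[OF that] after by simp
  show "0 \<le> edge_payoff n (x(i0 := center)) i0 j - edge_payoff n x i0 j / c"
  proof (cases "?w < 2")
    case False
    then have "?w = 2"
      using next_above_le[of n x i0 j 0] by simp
    moreover have "edge_payoff n x i0 j / c \<le> 1"
      using edge_payoff_le_share_bound[of n x i0 j c] assms(3,4) by simp
    ultimately show ?thesis
      using after by simp
  next
    case True
    then show ?thesis
      using before[OF True] after nearest_position by argo
  qed
qed

lemma own_edge_payoff_le:
  assumes "\<And>y. share n x i0 y \<le> c"
  shows "edge_payoff n x i0 e \<le> c * ((r + next_above n x i0 e r) / 2)"
proof -
  let ?v = "next_above n x i0 e r"
  have "edge_payoff n x i0 e \<le> c * ((r + ?v) / 2 - 0)"
  proof (rule edge_payoff_le_cell[OF i0(1) snd_player_nonneg assms])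
    show "(r + ?v) / 2 = 1 \<or> (\<exists>m<n. edge_coord e (x i0) < edge_coord e (x m)
        \<and> (edge_coord e (x i0) + edge_coord e (x m)) / 2 \<le> (r + ?v) / 2)"
      using next_above_cases[of n x i0 e r] i0(2) by (auto simp: edge_coord_def)
  qed (use next_above_ge[of r n x i0 e] next_above_le[of n x i0 e r] nearest_position in auto)
  then show ?thesis
    by simp
qed

lemma payoff_ge_beyond_nearest: "(next_above n x i0 e r - r) / 2 \<le> payoff k n x i0"
  using next_above_ge[of r n x i0 e] next_above_le[of n x i0 e r] nearest_position
    next_above_gap[of _ n i0 e x r]
  by (intro payoff_ge_half_gap[OF i0(1)]) auto

lemma edge_occupied_if_nearest_has_neighbour:
  assumes "mq < n" "fst (x mq) = e" "r < snd (x mq)" "j \<in> {1..k}" "j \<noteq> e"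
  shows "next_above n x i0 j 0 < 2"
proof (rule ccontr)
  assume "\<not> ?thesis"
  then have empty: "next_above n x i0 j 0 = 2"
    using next_above_le[of n x i0 j 0] by simp
  have "mq \<noteq> i0"
    using assms(3) i0(2) by auto
  have mq: "edge_coord e (x mq) = snd (x mq)" "snd (x mq) \<le> 1"
    using assms(2) player_off_center[OF assms(1) no_center[OF assms(1)]] by (auto simp: edge_coord_def)
  have "payoff k n x mq \<le> edge_payoff n x mq e"
    using payoff_le_own_edge_payoff[of i0 n x mq k] assms(1-3) i0 nearest_position by simp
  also have "\<dots> \<le> 1 * (1 - (r + snd (x mq)) / 2)"
  proof (rule edge_payoff_le_cell[OF assms(1) snd_player_nonneg share_le_one])
    show "(r + snd (x mq)) / 2 = 0 \<or> (\<exists>m<n. edge_coord e (x m) < edge_coord e (x mq)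
        \<and> (r + snd (x mq)) / 2 \<le> (edge_coord e (x m) + edge_coord e (x mq)) / 2)"
      using i0 assms(3) mq by (intro disjI2 exI[of _ i0]) (simp add: edge_coord_def)
  qed (use assms(3) mq nearest_position in auto)
  also have "\<dots> < (2 - 0) / 2"
    using assms(3) nearest_position by simp
  also have "\<dots> \<le> payoff k n x mq"
  proof (rule payoff_ge_half_gap[OF assms(1,4)])
    fix m assume "m < n" "m \<noteq> mq"
    then show "edge_coord j (x m) \<le> 0 \<or> 2 \<le> edge_coord j (x m)"
      using next_above_gap[of m n i0 j x 0] empty i0 assms(5) nearest_position \<open>mq \<noteq> i0\<close>
      by (cases "m = i0") (auto simp: edge_coord_def)
  qed auto
  finally show False
    by simp
qed

lemma center_deviation_gain_nonpos:
  assumes "e \<in> S" "S \<subseteq> {1..k}"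
  shows "(\<Sum>j\<in>S. edge_payoff n (x(i0 := center)) i0 j - edge_payoff n x i0 j) \<le> 0"
proof -
  let ?G = "\<lambda>j. edge_payoff n (x(i0 := center)) i0 j - edge_payoff n x i0 j"
  have "sum ?G S \<le> sum ?G {1..k}"
    using assms other_edge_gain(1)[OF _ _ zero_less_one share_le_one] by (intro sum_mono2) auto
  also have "\<dots> \<le> 0"
    using payoff_update_le[OF i0(1), of center]
    by (simp add: payoff_eq_sum_edge_payoff sum_subtractf star_pt_def)
  finally show ?thesis .
qed

lemma nearest_has_neighbour_on_edge:
  assumes "2 \<le> n"
  shows "next_above n x i0 e 0 < 2"
proof (rule ccontr)
  assume "\<not> ?thesis"
  then have empty: "next_above n x i0 e 0 = 2"
    using next_above_le[of n x i0 e 0] by simp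
  define i' :: nat where "i' = (if i0 = 0 then 1 else 0)"
  have i': "i' < n" "i' \<noteq> i0"
    using assms by (auto simp: i'_def)
  define e' where "e' = fst (x i')"
  have e': "e' \<in> {1..k}" "0 < snd (x i')" "snd (x i') \<le> 1"
    using player_off_center[OF i'(1) no_center[OF i'(1)]] by (auto simp: e'_def)
  have "e' \<noteq> e" "next_above n x i0 e' 0 < 2"
    using next_above_gap[OF i', of e' x 0] next_above_gap[OF i', of e x 0] empty e'
    by (auto simp: edge_coord_def e'_def)
  then have "r / 2 \<le> edge_payoff n (x(i0 := center)) i0 e' - edge_payoff n x i0 e'"
    using other_edge_gain(2)[OF e'(1) _ zero_less_one share_le_one] by simp
  moreover have "edge_payoff n x i0 e \<le> edge_payoff n (x(i0 := center)) i0 e"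
    using center_deviation_edge_payoff[OF nearest_position(1)] empty
      edge_payoff_le_share_bound[of n x i0 e 1] share_le_one by simp
  ultimately show False
    using center_deviation_gain_nonpos[of "{e, e'}"] \<open>e' \<noteq> e\<close> e'(1) nearest_position by simp
qed

lemma nearest_not_alone:
  assumes "3 \<le> k" "2 \<le> n"
  shows "2 \<le> card {m \<in> {..<n}. x m = x i0}"
proof (rule ccontr)
  assume "\<not> ?thesis"
  then have card: "card {m \<in> {..<n}. x m = x i0} \<le> 1"
    by simp
  have alone: "x m \<noteq> x i0" if "m < n" "m \<noteq> i0" for m
    using card_le_one_unique[OF card i0(1) that(1)] that(2) by blast
  obtain mq where mq: "mq < n" "mq \<noteq> i0" "0 < edge_coord e (x mq)"
      "edge_coord e (x mq) = next_above n x i0 e 0"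
    using next_above_cases[of n x i0 e 0] nearest_has_neighbour_on_edge[OF assms(2)] by auto
  have "fst (x mq) = e"
    using mq(3) snd_player_nonneg[OF mq(1)] by (auto simp: edge_coord_def split: if_splits)
  moreover have "x mq \<noteq> (e, r)"
    using alone[OF mq(1,2)] i0(2) by simp
  ultimately have mq_pos: "fst (x mq) = e" "r < snd (x mq)"
    using nearest[OF mq(1)] by (cases "x mq"; auto)+
  have "edge_payoff n x i0 e \<le> 1 * ((r + snd (x mq)) / 2 - 0)"
  proof (rule edge_payoff_le_cell[OF i0(1) snd_player_nonneg share_le_one])
    show "(r + snd (x mq)) / 2 = 1 \<or> (\<exists>m<n. edge_coord e (x i0) < edge_coord e (x m)
        \<and> (edge_coord e (x i0) + edge_coord e (x m)) / 2 \<le> (r + snd (x mq)) / 2)"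
      using i0(2) mq(1) mq_pos by (intro disjI2 exI[of _ mq]) (simp add: edge_coord_def)
  qed (use mq_pos player_off_center[OF mq(1) no_center[OF mq(1)]] nearest_position in auto)
  then have "- r / 2 \<le> edge_payoff n (x(i0 := center)) i0 e - edge_payoff n x i0 e"
    using center_deviation_edge_payoff[OF nearest_position(1)] mq(4) mq_pos by (simp add: edge_coord_def)
  moreover obtain j1 j2 where j: "j1 \<in> {1..k}" "j2 \<in> {1..k}" "j1 \<noteq> e" "j2 \<noteq> e" "j1 \<noteq> j2"
    using two_other_edges[OF assms(1) nearest_position(1)] .
  moreover have "r / 2 \<le> edge_payoff n (x(i0 := center)) i0 j1 - edge_payoff n x i0 j1"
    and "r / 2 \<le> edge_payoff n (x(i0 := center)) i0 j2 - edge_payoff n x i0 j2"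
    using other_edge_gain(2)[OF _ _ zero_less_one share_le_one]
      edge_occupied_if_nearest_has_neighbour[OF mq(1) mq_pos] j by simp_all
  ultimately show False
    using center_deviation_gain_nonpos[of "{e, j1, j2}"] nearest_position by simp
qed

lemma edge_occupied_if_nearest_shared:
  assumes "2 \<le> card {m \<in> {..<n}. x m = x i0}" "j \<in> {1..k}" "j \<noteq> e"
  shows "next_above n x i0 j 0 < 2"
proof (rule ccontr)
  assume "\<not> ?thesis"
  then have empty: "next_above n x i0 j 0 = 2"
    using next_above_le[of n x i0 j 0] by simp
  have share: "share n x i0 y \<le> 1 / 2" for y
    using assms(1) by (intro share_le_inverse[OF i0(1)]) auto
  have "r / 2 - 1 / 2 \<le> edge_payoff n (x(i0 := center)) i0 e - edge_payoff n x i0 e"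
    using center_deviation_edge_payoff[OF nearest_position(1)] next_above_ge_nearest[of e]
      edge_payoff_le_share_bound[of n x i0 e "1 / 2"] share by simp
  moreover have "1 / 2 \<le> edge_payoff n (x(i0 := center)) i0 j - edge_payoff n x i0 j"
    using center_deviation_edge_payoff[OF assms(2)] empty
      edge_payoff_le_share_bound[of n x i0 j "1 / 2"] share by simp
  ultimately show False
    using center_deviation_gain_nonpos[of "{e, j}"] assms(2,3) nearest_position by simp
qed

lemma nearest_not_shared:
  assumes "3 \<le> k"
  shows "card {m \<in> {..<n}. x m = x i0} \<le> 1"
proof (rule ccontr)
  assume "\<not> ?thesis"
  then have shared: "2 \<le> card {m \<in> {..<n}. x m = x i0}"
    by simp
  have share: "share n x i0 y \<le> 1 / 2" for y
    using shared by (intro share_le_inverse[OF i0(1)]) auto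
  define E0 E where "E0 j = edge_payoff n (x(i0 := center)) i0 j"
    and "E j = edge_payoff n x i0 j" for j
  define v where "v = next_above n x i0 e r"
  have gain: "0 \<le> E0 j - 2 * E j" "r / 2 \<le> E0 j - 2 * E j" if "j \<in> {1..k}" "j \<noteq> e" for j
    using other_edge_gain[of j "1 / 2", OF that _ share] edge_occupied_if_nearest_shared[OF shared that]
    by (simp_all add: E0_def E_def)
  obtain j1 j2 where j: "j1 \<in> {1..k}" "j2 \<in> {1..k}" "j1 \<noteq> e" "j2 \<noteq> e" "j1 \<noteq> j2"
    using two_other_edges[OF assms(1) nearest_position(1)] .
  \<comment> \<open>twice the payoff dominates the payoffs after moving to the centre and after moving outward\<close>
  have "E0 e - 2 * E e + r \<le> (\<Sum>j\<in>{e, j1, j2}. E0 j - 2 * E j)"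
    using gain(2)[OF j(1,3)] gain(2)[OF j(2,4)] j by simp
  also have "\<dots> \<le> (\<Sum>j = 1..k. E0 j - 2 * E j)"
    using gain(1) j nearest_position by (intro sum_mono2) auto
  also have "\<dots> = sum E0 {1..k} - 2 * sum E {1..k}"
    by (simp add: sum_subtractf sum_distrib_left)
  also have "\<dots> \<le> - (v - r) / 2"
    using payoff_update_le[OF i0(1), of center] payoff_ge_beyond_nearest
    by (simp add: E0_def E_def payoff_eq_sum_edge_payoff star_pt_def v_def)
  finally have "E0 e - 2 * E e + r \<le> - (v - r) / 2" .
  moreover have "r / 2 \<le> E0 e" "E e \<le> 1 / 2 * ((r + v) / 2)"
    using center_deviation_edge_payoff[OF nearest_position(1)] next_above_ge_nearest[of e]
      own_edge_payoff_le[OF share] by (simp_all add: E0_def E_def v_def)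
  ultimately show False
    using nearest_position by argo
qed

end

lemma center_occupied:
  assumes "3 \<le> k" "2 \<le> n"
  shows "\<exists>i<n. x i = center"
proof (rule ccontr)
  assume "\<not> ?thesis"
  then have no_center: "x m \<noteq> center" if "m < n" for m
    using that by blast
  define i0 where "i0 = arg_min_on (\<lambda>m. snd (x m)) {..<n}"
  have "i0 < n" "\<not> (\<exists>m\<in>{..<n}. snd (x m) < snd (x i0))"
    using arg_min_if_finite[of "{..<n}" "\<lambda>m. snd (x m)"] assms(2) by (auto simp: i0_def lessThan_empty_iff)
  then have i0: "i0 < n" "x i0 = (fst (x i0), snd (x i0))" "\<And>m. m < n \<Longrightarrow> snd (x i0) \<le> snd (x m)"
    by (auto simp: not_less)
  show False
    using nearest_not_alone[OF i0(1,2) no_center i0(3) assms]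
      nearest_not_shared[OF i0(1,2) no_center i0(3) assms(1)] by simp
qed

lemma farthest_point_on_edge_shared:
  assumes "ic < n" "x ic = center" "i < n" "x i \<noteq> center" "j \<in> {1..k}"
  shows "\<exists>t. 2 \<le> card {m \<in> {..<n}. x m = (j, t)} \<and> (\<forall>m<n. fst (x m) = j \<longrightarrow> snd (x m) \<le> t)"
proof -
  let ?S = "{m. m < n \<and> fst (x m) = j}"
  define i1 where "i1 = arg_min_on (\<lambda>m. - snd (x m)) ?S"
  have "?S \<noteq> {}"
    using edge_occupied[OF assms] by auto
  then have "i1 \<in> ?S" "\<not> (\<exists>m\<in>?S. - snd (x m) < - snd (x i1))"
    using arg_min_if_finite[of ?S "\<lambda>m. - snd (x m)"] by (simp_all add: i1_def)
  then have i1: "i1 < n" "fst (x i1) = j" "\<And>m. m < n \<Longrightarrow> fst (x m) = j \<Longrightarrow> snd (x m) \<le> snd (x i1)"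
    by (auto simp: not_less)
  have "x i1 \<noteq> center"
    using i1(2) assms(5) by (auto simp: center_def)
  then have "2 \<le> card {m \<in> {..<n}. x m = (j, snd (x i1))}"
    using farthest_player_not_alone[OF assms(1,2) i1(1)] i1 by (simp add: prod_eq_iff)
  then show ?thesis
    using i1 by (intro exI[of _ "snd (x i1)"]) auto
qed

end

theorem mainTheorem20:
  fixes k n :: nat and x :: "nat \<Rightarrow> spt"
  assumes "k \<ge> 3" and "n \<ge> 2" and "nash_eq k n x"
  shows "(\<exists>i<n. x i = center)
    \<and> (\<forall>p. star_pt k p \<and> p \<noteq> center \<longrightarrow> card {i \<in> {..<n}. x i = p} \<le> 2)
    \<and> card {i \<in> {..<n}. x i = center} \<le> k
    \<and> ((\<exists>i<n. x i \<noteq> center) \<longrightarrow>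
        (\<forall>j \<in> {1..k}. card {i \<in> {..<n}. fst (x i) = j} \<ge> 2 \<and>
           (\<exists>t. card {i \<in> {..<n}. x i = (j, t)} \<ge> 2 \<and>
                (\<forall>i<n. fst (x i) = j \<longrightarrow> snd (x i) \<le> t))))"
proof -
  interpret star_nash k n x
    using assms(3) by unfold_locales
  obtain ic where ic: "ic < n" "x ic = center"
    using center_occupied[OF assms(1,2)] by blast
  have edges: "card {i \<in> {..<n}. fst (x i) = j} \<ge> 2 \<and>
      (\<exists>t. card {i \<in> {..<n}. x i = (j, t)} \<ge> 2 \<and> (\<forall>i<n. fst (x i) = j \<longrightarrow> snd (x i) \<le> t))"
    if off_center: "i < n" "x i \<noteq> center" "j \<in> {1..k}" for i j
  proof -
    obtain t where t: "2 \<le> card {m \<in> {..<n}. x m = (j, t)}" "\<forall>m<n. fst (x m) = j \<longrightarrow> snd (x m) \<le> t"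
      using farthest_point_on_edge_shared[OF ic off_center] by blast
    moreover have "card {m \<in> {..<n}. x m = (j, t)} \<le> card {m \<in> {..<n}. fst (x m) = j}"
      by (intro card_mono) auto
    ultimately show ?thesis
      by auto
  qed
  show ?thesis
    using ic card_at_edge_point_le_two[OF ic] edges card_at_center_le[OF _ ic] assms(1) by auto
qed

end
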